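(* Let $p \ge 1$, $t \ge 0$ and $\mathbf a = [a_1\;a_2\;a_3\;a_4]^t \in \mathbb R^4$. Let $\mathbf K, \mathbf L$ be the linear maps on $\mathbb R^4$ given by $\mathbf K\mathbf y = [y_1\;\; 0.5(y_2+y_3)\;\; 0.5(y_2+y_3)\;\; y_4]^t$ and $\mathbf L\mathbf y = [0\;\; 0.5(y_2-y_3)\;\; 0.5(y_3-y_2)\;\; 0]^t$. For $\mathbf b\in\mathbb R^4$ let $\mathcal P_s(\mathbf b,t)$ denote the minimizer over $\mathbf z\in\mathbb R^4$ of $\frac12\|\mathbf z-\mathbf b\|_2^2 + t\|\mathbf z\|_{S(p)}$. Then the minimizer over $\mathbf z\in\mathbb R^4$ of $$L_s(\mathbf z,\mathbf a) = \tfrac12\|\mathbf z - \mathbf a\|_2^2 + t\|\mathbf K\mathbf z\|_{S(p)}$$ is $\bar{\mathcal P}_s(\mathbf a,t) = \mathbf L\mathbf a + \mathcal P_s(\mathbf K\mathbf a, t)$.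
   Context: For a vector $\mathbf y = [y_1\;y_2\;y_3\;y_4]^t\in\mathbb R^4$, $\|\mathbf y\|_{S(p)}$ denotes the Schatten $p$-norm (the $\ell_p$ norm of the singular values) of the $2\times2$ matrix $\begin{bmatrix} y_1 & y_2\\ y_3 & y_4\end{bmatrix}$. $\|\cdot\|_2$ is the Euclidean norm. *)

theory Defs
  imports "HOL-Analysis.Analysis"
begin

definition mat2 :: "real^4 \<Rightarrow> real^2^2" where
  "mat2 y = (\<chi> i j. if i = 1 then (if j = 1 then y$1 else y$2)
                     else (if j = 1 then y$3 else y$4))"

text \<open>Singular values: square roots of the two eigenvalues of the symmetric
  positive semidefinite Gram matrix G = M^T M, given by the closed-form
  eigenvalue formula for a symmetric 2x2 matrix.\<close>
definition singvals :: "real^4 \<Rightarrow> real \<times> real" where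
  "singvals y = (let G = transpose (mat2 y) ** mat2 y;
                     tr = G$1$1 + G$2$2;
                     disc = sqrt ((G$1$1 - G$2$2)^2 + 4 * (G$1$2)^2)
                 in (sqrt ((tr + disc) / 2), sqrt ((tr - disc) / 2)))"

definition schatten :: "real \<Rightarrow> real^4 \<Rightarrow> real" where
  "schatten p y = ((fst (singvals y)) powr p + (snd (singvals y)) powr p) powr (1 / p)"

definition Kmap :: "real^4 \<Rightarrow> real^4" where
  "Kmap y = vector [y$1, (y$2 + y$3) / 2, (y$2 + y$3) / 2, y$4]"

definition Lmap :: "real^4 \<Rightarrow> real^4" where
  "Lmap y = vector [0, (y$2 - y$3) / 2, (y$3 - y$2) / 2, 0]"

definition is_minimizer :: "('a \<Rightarrow> real) \<Rightarrow> 'a \<Rightarrow> bool" where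
  "is_minimizer f z \<longleftrightarrow> (\<forall>w. f z \<le> f w)"

definition Ps :: "real \<Rightarrow> real^4 \<Rightarrow> real \<Rightarrow> real^4" where
  "Ps p b t = (THE z. is_minimizer (\<lambda>z. (1/2) * (norm (z - b))^2 + t * schatten p z) z)"

definition Ls :: "real \<Rightarrow> real \<Rightarrow> real^4 \<Rightarrow> real^4 \<Rightarrow> real" where
  "Ls p t z a = (1/2) * (norm (z - a))^2 + t * schatten p (Kmap z)"

end

(* The map K is the orthogonal projection of R^4 onto the vectors with y2 = y3 (the matrices
   that are symmetric off the diagonal) and L = I - K, so by Pythagoras
     L_s(z, a) = [1/2 ||Kz - Ka||^2 + t ||Kz||_S(p)] + 1/2 ||Lz - La||^2.
   The bracket is the proximal objective at Ka evaluated at Kz. It has a unique minimizer P,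
   because the Schatten norm is convex, and P is itself symmetric, because transposition
   preserves both terms of the objective and fixes Ka. Hence z = La + P minimizes both summands
   at once, and it is the only point that does.
   Convexity of the Schatten norm is elementary in dimension 2: the singular values are
   |alpha| + |beta| and ||alpha| - |beta||, where alpha and beta are the complex-linear and
   complex-antilinear parts of the matrix, and the l_p norm of (u + v, u - v) is a monotone
   norm in (u, v). *)
theory Submission
  imports Defs
begin

section \<open>The p-norm on the plane\<close>

definition lp_norm :: "real \<Rightarrow> real \<Rightarrow> real \<Rightarrow> real" where
  "lp_norm p x y = (\<bar>x\<bar> powr p + \<bar>y\<bar> powr p) powr (1 / p)"

lemma lp_norm_nonneg: "lp_norm p x y \<ge> 0"
  by (simp add: lp_norm_def)

lemma lp_norm_eq_0_iff: "lp_norm p x y = 0 \<longleftrightarrow> x = 0 \<and> y = 0"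
  by (simp add: lp_norm_def add_nonneg_eq_0_iff)

lemma lp_norm_commute: "lp_norm p x y = lp_norm p y x"
  by (simp add: lp_norm_def add.commute)

lemma lp_norm_minus: "lp_norm p (- x) (- y) = lp_norm p x y"
  by (simp add: lp_norm_def)

lemma lp_norm_scale:
  assumes "p \<noteq> 0"
  shows "lp_norm p (c * x) (c * y) = \<bar>c\<bar> * lp_norm p x y"
proof -
  have "lp_norm p (c * x) (c * y) = (\<bar>c\<bar> powr p) powr (1 / p) * lp_norm p x y"
    by (simp add: lp_norm_def abs_mult powr_mult distrib_left [symmetric])
  also have "(\<bar>c\<bar> powr p) powr (1 / p) = \<bar>c\<bar>"
    using assms by (simp add: powr_powr)
  finally show ?thesis .
qed

lemma lp_norm_le_1_iff:
  assumes "p > 0"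
  shows "lp_norm p x y \<le> 1 \<longleftrightarrow> \<bar>x\<bar> powr p + \<bar>y\<bar> powr p \<le> 1"
proof -
  define s where "s = \<bar>x\<bar> powr p + \<bar>y\<bar> powr p"
  have "s \<le> 1 \<Longrightarrow> s powr (1 / p) \<le> 1"
    using assms by (intro powr_le1) (auto simp: s_def)
  moreover have "1 < s \<Longrightarrow> 1 < s powr (1 / p)"
    using powr_less_mono2 [of "1 / p" 1 s] assms by simp
  ultimately show ?thesis
    unfolding lp_norm_def s_def [symmetric] by (meson not_le)
qed

lemma convex_on_abs_powr:
  assumes "p \<ge> 1"
  shows "convex_on UNIV (\<lambda>x::real. \<bar>x\<bar> powr p)"
proof (rule convex_onI)
  fix l x y :: real
  assume l: "0 < l" "l < 1"
  have scaled: "(c * u) powr p \<le> c * u powr p" if "0 < c" "c \<le> 1" "0 \<le> u" for c u :: real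
    using powr_le_one_le [of c p] that assms
    by (simp add: powr_mult mult_right_mono)
  have "\<bar>(1 - l) * x + l * y\<bar> powr p \<le> ((1 - l) * \<bar>x\<bar> + l * \<bar>y\<bar>) powr p"
    using l assms by (intro powr_mono2) (auto intro: order_trans [OF abs_triangle_ineq] simp: abs_mult)
  also have "\<dots> \<le> (1 - l) * \<bar>x\<bar> powr p + l * \<bar>y\<bar> powr p"
  proof (cases "x = 0 \<or> y = 0")
    case True
    then show ?thesis
      using scaled [of "1 - l" "\<bar>x\<bar>"] scaled [of l "\<bar>y\<bar>"] l assms by auto
  next
    case False
    then show ?thesis
      using convex_onD [OF powr_convex [OF assms], of l "\<bar>x\<bar>" "\<bar>y\<bar>"] l by simp
  qed
  finally show "\<bar>(1 - l) *\<^sub>R x + l *\<^sub>R y\<bar> powr p \<le> (1 - l) * \<bar>x\<bar> powr p + l * \<bar>y\<bar> powr p"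
    by simp
qed simp

lemma lp_norm_triangle:
  assumes p: "p \<ge> 1"
  shows "lp_norm p (x1 + x2) (y1 + y2) \<le> lp_norm p x1 y1 + lp_norm p x2 y2"
proof (cases "lp_norm p x1 y1 = 0 \<or> lp_norm p x2 y2 = 0")
  case True
  then show ?thesis
    by (auto simp: lp_norm_eq_0_iff lp_norm_nonneg)
next
  case False
  define s r where "s = lp_norm p x1 y1" and "r = lp_norm p x2 y2"
  have "s > 0" "r > 0"
    using False lp_norm_nonneg [of p] by (auto simp: s_def r_def order.strict_iff_order)
  have unit: "\<bar>x / n\<bar> powr p + \<bar>y / n\<bar> powr p \<le> 1" if "n = lp_norm p x y" "n > 0" for n x y
  proof -
    have "lp_norm p (inverse n * x) (inverse n * y) = 1"
      using that p by (simp add: lp_norm_scale)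
    then show ?thesis
      using p by (simp add: lp_norm_le_1_iff [symmetric] divide_inverse mult.commute)
  qed
  define l where "l = r / (s + r)"
  have l: "0 \<le> l" "l \<le> 1" "1 - l = s / (s + r)"
    using \<open>s > 0\<close> \<open>r > 0\<close> by (auto simp: l_def field_simps)
  have split: "(u + v) / (s + r) = (1 - l) * (u / s) + l * (v / r)" for u v
    unfolding l(3) using \<open>s > 0\<close> \<open>r > 0\<close> by (simp add: l_def add_divide_distrib)
  have convex: "\<bar>(1 - l) * u + l * v\<bar> powr p \<le> (1 - l) * \<bar>u\<bar> powr p + l * \<bar>v\<bar> powr p" for u v
    using convex_onD [OF convex_on_abs_powr [OF p], of l u v] l by simp
  have "\<bar>(x1 + x2) / (s + r)\<bar> powr p + \<bar>(y1 + y2) / (s + r)\<bar> powr p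
      \<le> (1 - l) * (\<bar>x1 / s\<bar> powr p + \<bar>y1 / s\<bar> powr p) + l * (\<bar>x2 / r\<bar> powr p + \<bar>y2 / r\<bar> powr p)"
    unfolding split using convex [of "x1 / s" "x2 / r"] convex [of "y1 / s" "y2 / r"]
    by (simp add: algebra_simps)
  also have "\<dots> \<le> (1 - l) * 1 + l * 1"
    using unit [OF s_def \<open>s > 0\<close>] unit [OF r_def \<open>r > 0\<close>] l
    by (intro add_mono mult_left_mono) auto
  finally have "lp_norm p (inverse (s + r) * (x1 + x2)) (inverse (s + r) * (y1 + y2)) \<le> 1"
    using p by (simp add: lp_norm_le_1_iff divide_inverse mult.commute)
  then have "lp_norm p (x1 + x2) (y1 + y2) / (s + r) \<le> 1"
    using p \<open>s > 0\<close> \<open>r > 0\<close> by (simp add: lp_norm_scale divide_inverse_commute)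
  then show ?thesis
    using \<open>s > 0\<close> \<open>r > 0\<close> by (simp add: s_def r_def)
qed

lemma convex_on_lp_norm_affine:
  assumes p: "p \<ge> 1"
  shows "convex_on UNIV (\<lambda>s. lp_norm p (a * s + b) (c * s + d))"
proof (rule convex_onI)
  fix l s s' :: real
  assume l: "0 < l" "l < 1"
  have "lp_norm p (a * ((1 - l) *\<^sub>R s + l *\<^sub>R s') + b) (c * ((1 - l) *\<^sub>R s + l *\<^sub>R s') + d)
      = lp_norm p ((1 - l) * (a * s + b) + l * (a * s' + b)) ((1 - l) * (c * s + d) + l * (c * s' + d))"
    by (simp add: algebra_simps)
  also have "\<dots> \<le> lp_norm p ((1 - l) * (a * s + b)) ((1 - l) * (c * s + d))
                 + lp_norm p (l * (a * s' + b)) (l * (c * s' + d))"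
    by (rule lp_norm_triangle [OF p])
  also have "\<dots> = (1 - l) * lp_norm p (a * s + b) (c * s + d) + l * lp_norm p (a * s' + b) (c * s' + d)"
    using l p by (simp add: lp_norm_scale)
  finally show "lp_norm p (a * ((1 - l) *\<^sub>R s + l *\<^sub>R s') + b) (c * ((1 - l) *\<^sub>R s + l *\<^sub>R s') + d)
      \<le> (1 - l) * lp_norm p (a * s + b) (c * s + d) + l * lp_norm p (a * s' + b) (c * s' + d)" .
qed simp

lemma convex_even_mono:
  fixes f :: "real \<Rightarrow> real"
  assumes f: "convex_on UNIV f" and even: "\<And>x. f (- x) = f x" and "\<bar>x\<bar> \<le> y"
  shows "f x \<le> f y"
proof (cases "y = 0")
  case True
  with \<open>\<bar>x\<bar> \<le> y\<close> show ?thesis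
    by simp
next
  case False
  with \<open>\<bar>x\<bar> \<le> y\<close> have "y > 0"
    by simp
  define l where "l = (y - x) / (2 * y)"
  have l: "0 \<le> l" "l \<le> 1"
    using \<open>\<bar>x\<bar> \<le> y\<close> \<open>y > 0\<close> by (auto simp: l_def field_simps)
  have "x = (1 - l) *\<^sub>R y + l *\<^sub>R (- y)"
    using \<open>y > 0\<close> by (simp add: l_def field_simps)
  then have "f x \<le> (1 - l) * f y + l * f (- y)"
    using convex_onD [OF f l, of y "- y"] by simp
  then show ?thesis
    by (simp add: even algebra_simps)
qed

lemma lp_norm_sum_diff_mono:
  assumes p: "p \<ge> 1" and "\<bar>u\<bar> \<le> u'"
  shows "lp_norm p (u + v) (u - v) \<le> lp_norm p (u' + v) (u' - v)"
proof (rule convex_even_mono [where f = "\<lambda>u. lp_norm p (u + v) (u - v)"])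
  show "convex_on UNIV (\<lambda>u. lp_norm p (u + v) (u - v))"
    using convex_on_lp_norm_affine [OF p, of 1 v 1 "- v"] by simp
  show "lp_norm p (- u + v) (- u - v) = lp_norm p (u + v) (u - v)" for u
    using lp_norm_minus [of p "u - v" "u + v"] by (simp add: lp_norm_commute)
qed (rule assms)

lemma lp_norm_sum_diff_commute: "lp_norm p (u + v) (u - v) = lp_norm p (v + u) (v - u)"
  by (simp add: lp_norm_def abs_minus_commute add.commute)

section \<open>Proximal maps\<close>

lemma norm_midpoint_diff_power2:
  fixes x y b :: "'a::real_inner"
  shows "(norm (midpoint x y - b))\<^sup>2 = ((norm (x - b))\<^sup>2 + (norm (y - b))\<^sup>2) / 2 - (norm (x - y))\<^sup>2 / 4"
  by (simp add: midpoint_def power2_norm_eq_inner inner_diff_left inner_diff_right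
      inner_add_left inner_add_right inner_commute field_simps)

lemma prox_minimizer_exists:
  fixes g :: "'a::euclidean_space \<Rightarrow> real"
  assumes g: "convex_on UNIV g" and g_nonneg: "\<And>x. g x \<ge> 0"
  shows "\<exists>z. is_minimizer (\<lambda>z. (1/2) * (norm (z - b))\<^sup>2 + g z) z"
proof -
  define F where "F = (\<lambda>z. (1/2) * (norm (z - b))\<^sup>2 + g z)"
  define R where "R = 2 * g b + 1"
  have "R \<ge> 1"
    using g_nonneg [of b] by (simp add: R_def)
  have "continuous_on UNIV F"
    unfolding F_def using convex_on_continuous [OF open_UNIV g] by (intro continuous_intros)
  moreover have "cball b R \<noteq> {}"
    using \<open>R \<ge> 1\<close> by simp
  ultimately obtain z where "z \<in> cball b R" and z: "\<And>y. y \<in> cball b R \<Longrightarrow> F z \<le> F y"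
    using continuous_attains_inf [OF compact_cball, of b R F] continuous_on_subset by blast
  have "F z \<le> F w" for w
  proof (cases "w \<in> cball b R")
    case False
    then have "R < norm (w - b)"
      by (simp add: dist_norm norm_minus_commute)
    have "F z \<le> F b"
      using z \<open>R \<ge> 1\<close> by simp
    also have "\<dots> < R / 2"
      by (simp add: F_def R_def)
    also have "\<dots> \<le> (1/2) * R\<^sup>2"
      using \<open>R \<ge> 1\<close> by (simp add: power2_eq_square)
    also have "\<dots> \<le> (1/2) * (norm (w - b))\<^sup>2"
      using \<open>R < norm (w - b)\<close> \<open>R \<ge> 1\<close> by (intro mult_left_mono power_mono) auto
    also have "\<dots> \<le> F w"
      using g_nonneg [of w] by (simp add: F_def)
    finally show ?thesis
      by simp
  qed (rule z)
  then show ?thesis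
    unfolding is_minimizer_def F_def by blast
qed

text \<open>By the parallelogram law, the midpoint of two distinct minimizers would do strictly better.\<close>

lemma prox_minimizer_unique:
  fixes g :: "'a::real_inner \<Rightarrow> real"
  assumes g: "convex_on UNIV g"
    and z1: "is_minimizer (\<lambda>z. (1/2) * (norm (z - b))\<^sup>2 + g z) z1"
    and z2: "is_minimizer (\<lambda>z. (1/2) * (norm (z - b))\<^sup>2 + g z) z2"
  shows "z1 = z2"
proof (rule ccontr)
  assume "z1 \<noteq> z2"
  define F where "F = (\<lambda>z. (1/2) * (norm (z - b))\<^sup>2 + g z)"
  define m where "m = midpoint z1 z2"
  have "(norm (z1 - z2))\<^sup>2 > 0"
    using \<open>z1 \<noteq> z2\<close> by simp
  then have "(norm (m - b))\<^sup>2 < ((norm (z1 - b))\<^sup>2 + (norm (z2 - b))\<^sup>2) / 2"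
    unfolding m_def norm_midpoint_diff_power2 by linarith
  moreover have "g m \<le> (1 - 1/2) * g z1 + (1/2) * g z2"
    using convex_onD [OF g, of "1/2" z1 z2] by (simp add: m_def midpoint_def scaleR_add_right)
  ultimately have "F m < (F z1 + F z2) / 2"
    by (simp add: F_def field_simps)
  moreover have "F z1 \<le> F m" "F z2 \<le> F m"
    using z1 z2 by (simp_all add: is_minimizer_def F_def)
  ultimately show False
    by simp
qed

section \<open>Singular values of 2x2 matrices\<close>

lemma vector_4 [simp]:
  "(vector [a, b, c, d] :: 'a::zero^4)$1 = a" "(vector [a, b, c, d] :: 'a::zero^4)$2 = b"
  "(vector [a, b, c, d] :: 'a::zero^4)$3 = c" "(vector [a, b, c, d] :: 'a::zero^4)$4 = d"
  by (simp_all add: vector_def)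

lemma norm_vec4_power2: "(norm (x::real^4))\<^sup>2 = (x$1)\<^sup>2 + (x$2)\<^sup>2 + (x$3)\<^sup>2 + (x$4)\<^sup>2"
  unfolding power2_norm_eq_inner by (simp add: inner_vec_def sum_4 power2_eq_square)

definition conformal_part :: "real^4 \<Rightarrow> complex" where
  "conformal_part z = Complex ((z$1 + z$4) / 2) ((z$3 - z$2) / 2)"

definition anticonformal_part :: "real^4 \<Rightarrow> complex" where
  "anticonformal_part z = Complex ((z$1 - z$4) / 2) ((z$2 + z$3) / 2)"

lemma linear_conformal_part: "linear conformal_part"
  by (rule linearI) (simp_all add: conformal_part_def complex_eq_iff field_simps)

lemma linear_anticonformal_part: "linear anticonformal_part"
  by (rule linearI) (simp_all add: anticonformal_part_def complex_eq_iff field_simps)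

text \<open>Identifying \<open>\<real>\<^sup>2\<close> with \<open>\<complex>\<close>, the matrix \<^term>\<open>mat2 z\<close> acts as
  \<open>w \<mapsto> \<alpha> w + \<beta> conj w\<close> with \<open>\<alpha>\<close> its conformal and \<open>\<beta>\<close> its anticonformal part;
  such a map stretches by \<open>|\<alpha>| + |\<beta>|\<close> at most and by \<open>||\<alpha>| - |\<beta>||\<close> at least.\<close>

lemma singvals_eq:
  "singvals z = (cmod (conformal_part z) + cmod (anticonformal_part z),
                 \<bar>cmod (conformal_part z) - cmod (anticonformal_part z)\<bar>)"
proof -
  define u v where "u = cmod (conformal_part z)" and "v = cmod (anticonformal_part z)"
  define G where "G = transpose (mat2 z) ** mat2 z"
  have G: "G$1$1 = (z$1)\<^sup>2 + (z$3)\<^sup>2" "G$2$2 = (z$2)\<^sup>2 + (z$4)\<^sup>2" "G$1$2 = z$1 * z$2 + z$3 * z$4"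
    by (simp_all add: G_def matrix_matrix_mult_def transpose_def mat2_def sum_2 power2_eq_square)
  have u2: "u\<^sup>2 = ((z$1 + z$4) / 2)\<^sup>2 + ((z$3 - z$2) / 2)\<^sup>2"
    by (simp add: u_def conformal_part_def cmod_power2)
  have v2: "v\<^sup>2 = ((z$1 - z$4) / 2)\<^sup>2 + ((z$2 + z$3) / 2)\<^sup>2"
    by (simp add: v_def anticonformal_part_def cmod_power2)
  have "u \<ge> 0" "v \<ge> 0"
    by (simp_all add: u_def v_def)
  have trace: "G$1$1 + G$2$2 = 2 * (u\<^sup>2 + v\<^sup>2)"
    unfolding G u2 v2 by (simp add: field_simps power2_eq_square)
  have "(G$1$1 - G$2$2)\<^sup>2 + 4 * (G$1$2)\<^sup>2 = (4 * u * v)\<^sup>2"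
    unfolding G power_mult_distrib [of "4 * u"] power_mult_distrib [of 4] u2 v2
    by (simp add: field_simps power2_eq_square)
  then have disc: "sqrt ((G$1$1 - G$2$2)\<^sup>2 + 4 * (G$1$2)\<^sup>2) = 4 * u * v"
    using \<open>u \<ge> 0\<close> \<open>v \<ge> 0\<close> by simp
  have "(2 * (u\<^sup>2 + v\<^sup>2) + 4 * u * v) / 2 = (u + v)\<^sup>2"
       "(2 * (u\<^sup>2 + v\<^sup>2) - 4 * u * v) / 2 = (u - v)\<^sup>2"
    by (simp_all add: field_simps power2_eq_square)
  then show ?thesis
    unfolding singvals_def Let_def G_def [symmetric] trace disc u_def [symmetric] v_def [symmetric]
    using \<open>u \<ge> 0\<close> \<open>v \<ge> 0\<close> by simp
qed

lemma schatten_eq_lp_norm: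
  "schatten p z = lp_norm p (cmod (conformal_part z) + cmod (anticonformal_part z))
                            (cmod (conformal_part z) - cmod (anticonformal_part z))"
  by (simp add: schatten_def singvals_eq lp_norm_def)

lemma schatten_nonneg: "schatten p z \<ge> 0"
  by (simp add: schatten_eq_lp_norm lp_norm_nonneg)

lemma schatten_scaleR:
  assumes "p \<noteq> 0"
  shows "schatten p (c *\<^sub>R z) = \<bar>c\<bar> * schatten p z"
proof -
  have "schatten p (c *\<^sub>R z)
      = lp_norm p (\<bar>c\<bar> * (cmod (conformal_part z) + cmod (anticonformal_part z)))
                  (\<bar>c\<bar> * (cmod (conformal_part z) - cmod (anticonformal_part z)))"
    by (simp add: schatten_eq_lp_norm linear_scale [OF linear_conformal_part]
        linear_scale [OF linear_anticonformal_part] distrib_left right_diff_distrib)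
  then show ?thesis
    using assms by (simp add: lp_norm_scale schatten_eq_lp_norm)
qed

lemma schatten_triangle:
  assumes p: "p \<ge> 1"
  shows "schatten p (z + w) \<le> schatten p z + schatten p w"
proof -
  define a b where "a = (\<lambda>z. cmod (conformal_part z))" and "b = (\<lambda>z. cmod (anticonformal_part z))"
  have a: "a (z + w) \<le> a z + a w" and b: "b (z + w) \<le> b z + b w"
    by (simp_all add: a_def b_def linear_add [OF linear_conformal_part]
        linear_add [OF linear_anticonformal_part] norm_triangle_ineq)
  have "schatten p (z + w) = lp_norm p (a (z + w) + b (z + w)) (a (z + w) - b (z + w))"
    by (simp add: schatten_eq_lp_norm a_def b_def)
  also have "\<dots> \<le> lp_norm p ((a z + a w) + b (z + w)) ((a z + a w) - b (z + w))"
    using a by (intro lp_norm_sum_diff_mono [OF p]) (simp add: a_def)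
  also have "\<dots> = lp_norm p (b (z + w) + (a z + a w)) (b (z + w) - (a z + a w))"
    by (rule lp_norm_sum_diff_commute)
  also have "\<dots> \<le> lp_norm p ((b z + b w) + (a z + a w)) ((b z + b w) - (a z + a w))"
    using b by (intro lp_norm_sum_diff_mono [OF p]) (simp add: b_def)
  also have "\<dots> = lp_norm p ((a z + b z) + (a w + b w)) ((a z - b z) + (a w - b w))"
    by (subst lp_norm_sum_diff_commute) (simp add: algebra_simps)
  also have "\<dots> \<le> schatten p z + schatten p w"
    unfolding schatten_eq_lp_norm a_def b_def by (rule lp_norm_triangle [OF p])
  finally show ?thesis .
qed

lemma convex_on_schatten:
  assumes p: "p \<ge> 1"
  shows "convex_on UNIV (schatten p)"
proof (rule convex_onI)
  fix l :: real and z w :: "real^4"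
  assume "0 < l" "l < 1"
  then show "schatten p ((1 - l) *\<^sub>R z + l *\<^sub>R w) \<le> (1 - l) * schatten p z + l * schatten p w"
    using schatten_triangle [OF p, of "(1 - l) *\<^sub>R z" "l *\<^sub>R w"] p by (simp add: schatten_scaleR)
qed simp

definition vec_transpose :: "real^4 \<Rightarrow> real^4" where
  "vec_transpose z = vector [z$1, z$3, z$2, z$4]"

lemma schatten_vec_transpose: "schatten p (vec_transpose z) = schatten p z"
proof -
  have "conformal_part (vec_transpose z) = cnj (conformal_part z)"
       "anticonformal_part (vec_transpose z) = anticonformal_part z"
    by (simp_all add: vec_transpose_def conformal_part_def anticonformal_part_def complex_eq_iff
        field_simps)
  then show ?thesis
    by (simp add: schatten_eq_lp_norm)
qed

lemma norm_vec_transpose_diff: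
  assumes "b$2 = b$3"
  shows "norm (vec_transpose z - b) = norm (z - b)"
proof -
  have "(norm (vec_transpose z - b))\<^sup>2 = (norm (z - b))\<^sup>2"
    using assms by (simp add: norm_vec4_power2 vec_transpose_def)
  then show ?thesis
    by simp
qed

section \<open>The proximal map of the Schatten norm\<close>

definition prox_objective :: "real \<Rightarrow> real \<Rightarrow> real^4 \<Rightarrow> real^4 \<Rightarrow> real" where
  "prox_objective p t b z = (1/2) * (norm (z - b))\<^sup>2 + t * schatten p z"

lemma is_minimizer_prox_iff_Ps:
  assumes p: "p \<ge> 1" and t: "t \<ge> 0"
  shows "is_minimizer (prox_objective p t b) z \<longleftrightarrow> z = Ps p b t"
  unfolding prox_objective_def
proof -
  have g: "convex_on UNIV (\<lambda>z. t * schatten p z)"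
    using t convex_on_schatten [OF p] by (rule convex_on_cmul)
  have "\<exists>z. is_minimizer (\<lambda>z. (1/2) * (norm (z - b))\<^sup>2 + t * schatten p z) z"
    using t by (intro prox_minimizer_exists [OF g]) (simp add: schatten_nonneg)
  then have "\<exists>!z. is_minimizer (\<lambda>z. (1/2) * (norm (z - b))\<^sup>2 + t * schatten p z) z"
    using prox_minimizer_unique [OF g] by blast
  then show "is_minimizer (\<lambda>z. (1/2) * (norm (z - b))\<^sup>2 + t * schatten p z) z \<longleftrightarrow> z = Ps p b t"
    unfolding Ps_def by (metis (no_types, lifting) the_equality)
qed

lemma prox_objective_Ps_le:
  assumes "p \<ge> 1" and "t \<ge> 0"
  shows "prox_objective p t b (Ps p b t) \<le> prox_objective p t b z"
  using is_minimizer_prox_iff_Ps [OF assms, of b "Ps p b t"] by (simp add: is_minimizer_def)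

text \<open>Transposition preserves both terms of the objective, so it fixes the unique minimizer.\<close>

lemma Ps_symmetric:
  assumes p: "p \<ge> 1" and t: "t \<ge> 0" and b: "b$2 = b$3"
  shows "Ps p b t $ 2 = Ps p b t $ 3"
proof -
  define P where "P = Ps p b t"
  have "is_minimizer (prox_objective p t b) P"
    using is_minimizer_prox_iff_Ps [OF p t] by (simp add: P_def)
  moreover have "prox_objective p t b (vec_transpose P) = prox_objective p t b P"
    by (simp add: prox_objective_def norm_vec_transpose_diff [OF b] schatten_vec_transpose)
  ultimately have "is_minimizer (prox_objective p t b) (vec_transpose P)"
    by (simp add: is_minimizer_def)
  then have "vec_transpose P = P"
    using is_minimizer_prox_iff_Ps [OF p t] by (simp add: P_def)
  then show ?thesis
    unfolding P_def vec_transpose_def by (metis vector_4(2))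
qed

section \<open>Splitting off the antisymmetric part\<close>

lemma Kmap_add_Lmap: "Kmap z + Lmap z = z"
  by (simp add: Kmap_def Lmap_def vec_eq_iff forall_4 field_simps)

lemma Kmap_Lmap_add_symmetric:
  assumes "y$2 = y$3"
  shows "Kmap (Lmap a + y) = y" and "Lmap (Lmap a + y) = Lmap a"
  using assms by (simp_all add: Kmap_def Lmap_def vec_eq_iff forall_4 field_simps)

lemma Ls_split:
  "Ls p t z a = prox_objective p t (Kmap a) (Kmap z) + (1/2) * (norm (Lmap z - Lmap a))\<^sup>2"
proof -
  have "(norm (z - a))\<^sup>2 = (norm (Kmap z - Kmap a))\<^sup>2 + (norm (Lmap z - Lmap a))\<^sup>2"
    unfolding norm_vec4_power2 by (simp add: Kmap_def Lmap_def power2_eq_square field_simps)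
  then show ?thesis
    by (simp add: Ls_def prox_objective_def algebra_simps)
qed

lemma Ls_Lmap_add_Ps:
  assumes "p \<ge> 1" and "t \<ge> 0"
  shows "Ls p t (Lmap a + Ps p (Kmap a) t) a = prox_objective p t (Kmap a) (Ps p (Kmap a) t)"
proof -
  have "Ps p (Kmap a) t $ 2 = Ps p (Kmap a) t $ 3"
    using Ps_symmetric [OF assms] by (simp add: Kmap_def)
  then show ?thesis
    by (simp add: Ls_split Kmap_Lmap_add_symmetric)
qed

lemma is_minimizer_Ls_Lmap_add_Ps:
  assumes "p \<ge> 1" and "t \<ge> 0"
  shows "is_minimizer (\<lambda>z. Ls p t z a) (Lmap a + Ps p (Kmap a) t)"
  unfolding is_minimizer_def Ls_Lmap_add_Ps [OF assms]
proof
  fix z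
  have "prox_objective p t (Kmap a) (Ps p (Kmap a) t) \<le> prox_objective p t (Kmap a) (Kmap z)"
    by (rule prox_objective_Ps_le [OF assms])
  then show "prox_objective p t (Kmap a) (Ps p (Kmap a) t) \<le> Ls p t z a"
    by (simp add: Ls_split add_increasing2)
qed

lemma Ls_minimizer_unique:
  assumes p: "p \<ge> 1" and t: "t \<ge> 0" and z: "is_minimizer (\<lambda>z. Ls p t z a) z"
  shows "z = Lmap a + Ps p (Kmap a) t"
proof -
  define P F where "P = Ps p (Kmap a) t" and "F = prox_objective p t (Kmap a)"
  have "Ls p t z a \<le> Ls p t (Lmap a + P) a"
    using z by (simp add: is_minimizer_def)
  then have "Ls p t z a \<le> F P"
    using Ls_Lmap_add_Ps [OF p t, of a] by (simp add: P_def F_def)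
  moreover have "F P \<le> F (Kmap z)"
    unfolding P_def F_def by (rule prox_objective_Ps_le [OF p t])
  moreover have "(norm (Lmap z - Lmap a))\<^sup>2 \<ge> 0"
    by simp
  ultimately have "F (Kmap z) \<le> F P" and "(norm (Lmap z - Lmap a))\<^sup>2 \<le> 0"
    unfolding Ls_split F_def [symmetric] by linarith+
  then have "is_minimizer F (Kmap z)" and "Lmap z = Lmap a"
    using prox_objective_Ps_le [OF p t] unfolding is_minimizer_def P_def F_def
    by (auto intro: order_trans)
  then have "Kmap z = P" and "Lmap z = Lmap a"
    using is_minimizer_prox_iff_Ps [OF p t] by (simp_all add: P_def F_def)
  then show ?thesis
    using Kmap_add_Lmap [of z] by (simp add: P_def add.commute)
qed

theorem proposition3:
  fixes p t :: real and a :: "real^4"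
  assumes "p \<ge> 1" and "t \<ge> 0"
  shows "\<forall>z. is_minimizer (\<lambda>z. Ls p t z a) z \<longleftrightarrow> z = Lmap a + Ps p (Kmap a) t"
  using is_minimizer_Ls_Lmap_add_Ps [OF assms] Ls_minimizer_unique [OF assms] by blast

end
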